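(* Consider $\dot x(t)=Ax(t)+Bu(t)$, $x(0)=x_0$, with $A\in\mathbb{R}^{n\times n}$, $B\in\mathbb{R}^{n\times m}$ and $(A,B)$ stabilizable. Let $r\in\mathbb{R}^n$ be a constant reference, $Q\in\mathbb{R}^{n\times n}$ symmetric with $Q>0$, $R\in\mathbb{R}^{m\times m}$ symmetric with $R>0$, and $\alpha>0$. Consider the cost $$J(u)=\int_0^\infty e^{-2\alpha t}\big[(x(t)-r)^\top Q(x(t)-r)+u^\top(t)Ru(t)\big]dt .$$ Let $$A_e=\begin{pmatrix}A-\alpha I_n&0\\0&-\alpha I_n\end{pmatrix},\quad B_e=\begin{pmatrix}B\\0\end{pmatrix},\quad Q_e=\begin{pmatrix}Q&-Q\\-Q&Q\end{pmatrix},$$ and let $P_e^-=\begin{pmatrix}P_1&P_{12}\\P_{12}^\top&P_2\end{pmatrix}$ (blocks of size $n\times n$) be the smallest positive semi-definite solution of $A_e^\top P+PA_e-PB_eR^{-1}B_e^\top P+Q_e=0$. Then for every initial state $x_0$, the input minimizing $J$ over piecewise continuous inputs is generated by the control law $$u(t)=K_1x(t)+K_2r,\qquad K_1=-R^{-1}B^\top P_1,\quad K_2=-R^{-1}B^\top P_{12}.$$ *)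

theory Defs
  imports "HOL-Analysis.Analysis"
begin

text \<open>Real matrices are rendered as real^'c^'r (rows indexed by 'r, columns by 'c).\<close>

definition sym_mat :: "real^'n^'n \<Rightarrow> bool" where
  "sym_mat M \<longleftrightarrow> transpose M = M"

definition pos_def :: "real^'n^'n \<Rightarrow> bool" where
  "pos_def M \<longleftrightarrow> (\<forall>x. x \<noteq> 0 \<longrightarrow> x \<bullet> (M *v x) > 0)"

definition pos_semidef :: "real^'n^'n \<Rightarrow> bool" where
  "pos_semidef M \<longleftrightarrow> (\<forall>x. x \<bullet> (M *v x) \<ge> 0)"

definition cmat :: "real^'c^'r \<Rightarrow> complex^'c^'r" where
  "cmat M = (\<chi> i j. complex_of_real (M $ i $ j))"

definition hurwitz :: "real^'n^'n \<Rightarrow> bool" where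
  "hurwitz M \<longleftrightarrow> (\<forall>(c::complex) v. v \<noteq> 0 \<and> cmat M *v v = c *s v \<longrightarrow> Re c < 0)"

definition stabilizable :: "real^'n^'n \<Rightarrow> real^'m^'n \<Rightarrow> bool" where
  "stabilizable A B \<longleftrightarrow> (\<exists>K :: real^'n^'m. hurwitz (A + B ** K))"

definition block ::
  "real^'c1^'r1 \<Rightarrow> real^'c2^'r1 \<Rightarrow> real^'c1^'r2 \<Rightarrow> real^'c2^'r2 \<Rightarrow> real^('c1+'c2)^('r1+'r2)" where
  "block M11 M12 M21 M22 = (\<chi> i j. case i of
       Inl a \<Rightarrow> (case j of Inl b \<Rightarrow> M11 $ a $ b | Inr b \<Rightarrow> M12 $ a $ b)
     | Inr a \<Rightarrow> (case j of Inl b \<Rightarrow> M21 $ a $ b | Inr b \<Rightarrow> M22 $ a $ b))"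

definition vblock :: "real^'c^'r1 \<Rightarrow> real^'c^'r2 \<Rightarrow> real^'c^('r1+'r2)" where
  "vblock M1 M2 = (\<chi> i j. case i of Inl a \<Rightarrow> M1 $ a $ j | Inr a \<Rightarrow> M2 $ a $ j)"

definition blk11 :: "real^('n+'n)^('n+'n) \<Rightarrow> real^'n^'n" where
  "blk11 P = (\<chi> i j. P $ Inl i $ Inl j)"
definition blk12 :: "real^('n+'n)^('n+'n) \<Rightarrow> real^'n^'n" where
  "blk12 P = (\<chi> i j. P $ Inl i $ Inr j)"

definition piecewise_continuous :: "(real \<Rightarrow> 'a::real_normed_vector) \<Rightarrow> bool" where
  "piecewise_continuous u \<longleftrightarrow>
     (\<forall>T\<ge>0. \<exists>D. finite D \<and>
        (\<forall>t\<in>{0..T} - D. continuous (at t within {0..}) u) \<and>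
        (\<forall>d\<in>D. (d > 0 \<longrightarrow> (\<exists>l. (u \<longlongrightarrow> l) (at_left d))) \<and> (\<exists>l. (u \<longlongrightarrow> l) (at_right d))))"

text \<open>x is the (Caratheodory) state trajectory of x' = A x + B u, x(0) = x0, on [0,\<infinity>):
  x(t) = x0 + \<integral>_0^t (A x(s) + B u(s)) ds for all t \<ge> 0.\<close>
definition trajectory ::
  "real^'n^'n \<Rightarrow> real^'m^'n \<Rightarrow> real^'n \<Rightarrow> (real \<Rightarrow> real^'m) \<Rightarrow> (real \<Rightarrow> real^'n) \<Rightarrow> bool" where
  "trajectory A B x0 u x \<longleftrightarrow>
     (\<forall>t\<ge>0. ((\<lambda>s. A *v x s + B *v u s) has_integral (x t - x0)) {0..t})"

definition cost ::
  "real \<Rightarrow> real^'n^'n \<Rightarrow> real^'m^'m \<Rightarrow> real^'n \<Rightarrow> (real \<Rightarrow> real^'n) \<Rightarrow> (real \<Rightarrow> real^'m) \<Rightarrow> ennreal" where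
  "cost \<alpha> Q R r x u =
     (\<integral>\<^sup>+ t\<in>{0..}. ennreal (exp (-2*\<alpha>*t) *
        ((x t - r) \<bullet> (Q *v (x t - r)) + u t \<bullet> (R *v u t))) \<partial>lborel)"

definition riccati :: "real^'k^'k \<Rightarrow> real^'m^'k \<Rightarrow> real^'k^'k \<Rightarrow> real^'m^'m \<Rightarrow> real^'k^'k \<Rightarrow> bool" where
  "riccati A B Q R P \<longleftrightarrow>
     transpose A ** P + P ** A - P ** B ** matrix_inv R ** transpose B ** P + Q = 0"

definition smallest_psd_riccati ::
  "real^'k^'k \<Rightarrow> real^'m^'k \<Rightarrow> real^'k^'k \<Rightarrow> real^'m^'m \<Rightarrow> real^'k^'k \<Rightarrow> bool" where
  "smallest_psd_riccati A B Q R P \<longleftrightarrow>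
     sym_mat P \<and> pos_semidef P \<and> riccati A B Q R P \<and>
     (\<forall>P'. sym_mat P' \<and> pos_semidef P' \<and> riccati A B Q R P' \<longrightarrow> pos_semidef (P' - P))"

end

theory Submission
  imports Defs "HOL-Real_Asymp.Real_Asymp"
begin

text \<open>Discounting by \<open>e\<^sup>-\<^sup>\<alpha>\<^sup>t\<close> turns the tracking problem into an undiscounted regulator problem
  for the extended state \<open>W = e\<^sup>-\<^sup>\<alpha>\<^sup>t (x, r)\<close> and input \<open>v = e\<^sup>-\<^sup>\<alpha>\<^sup>t u\<close>: then
  \<open>W' = A\<^sub>e W + B\<^sub>e v\<close> and the integrand of \<open>J\<close> is \<open>W\<^sup>T Q\<^sub>e W + v\<^sup>T R v\<close>. For a symmetric solution
  \<open>P\<close> of the Riccati equation, completing the square gives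
  \<open>(W\<^sup>T P W)' = |v + R\<^sup>-\<^sup>1 B\<^sub>e\<^sup>T P W|\<^sub>R\<^sup>2 - (W\<^sup>T Q\<^sub>e W + v\<^sup>T R v)\<close>, so the cost on \<open>[0, T]\<close> is
  \<open>W(0)\<^sup>T P W(0) - W(T)\<^sup>T P W(T)\<close> plus a nonnegative excess that vanishes exactly for the feedback
  \<open>v = -R\<^sup>-\<^sup>1 B\<^sub>e\<^sup>T P W\<close>, i.e. \<open>u = K\<^sub>1 x + K\<^sub>2 r\<close>. As \<open>P \<ge> 0\<close>, the feedback costs at most
  \<open>W(0)\<^sup>T P W(0)\<close>. Conversely, for an input of finite cost, \<open>Q > 0\<close> forces \<open>W(T)\<^sup>T P W(T)\<close> to
  become arbitrarily small, so no input costs less.\<close>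

section \<open>Matrices and quadratic forms\<close>

lemma sum_UNIV_Plus:
  "sum f (UNIV :: ('a::finite + 'b::finite) set) = (\<Sum>a\<in>UNIV. f (Inl a)) + (\<Sum>b\<in>UNIV. f (Inr b))"
  using sum.Plus[of "UNIV::'a set" "UNIV::'b set" f] by (simp add: comp_def)

lemma inner_matrix_vector_transpose: "x \<bullet> ((M::real^'m^'n) *v y) = (transpose M *v x) \<bullet> y"
  by (simp only: transpose_matrix_vector dot_lmul_matrix)

lemma sym_mat_inner_commute:
  assumes "sym_mat P" shows "x \<bullet> (P *v y) = y \<bullet> (P *v x)"
  using assms inner_matrix_vector_transpose[of x P y] by (simp add: sym_mat_def inner_commute)

lemma pos_def_imp_pos_semidef: "pos_def M \<Longrightarrow> pos_semidef M"
  unfolding pos_def_def pos_semidef_def by (metis inner_zero_left less_eq_real_def)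

lemma pos_def_imp_invertible:
  assumes "pos_def M" shows "invertible M"
proof -
  have "inj ((*v) M)"
    unfolding vec.inj_iff_eq_0
  proof (intro allI impI)
    fix x assume "M *v x = 0"
    then show "x = 0" using assms unfolding pos_def_def by force
  qed
  then obtain M' where "M' ** M = mat 1" using matrix_left_invertible_injective by blast
  then show ?thesis unfolding invertible_def using matrix_left_right_inverse by blast
qed

lemma matrix_mul_matrix_inv:
  assumes "invertible M" shows "M ** matrix_inv M = mat 1"
proof -
  have "\<exists>M'. M ** M' = mat 1 \<and> M' ** M = mat 1" using assms by (simp add: invertible_def)
  then show ?thesis unfolding matrix_inv_def by (rule someI2_ex) blast
qed

lemma continuous_on_matrix_vector_mult [continuous_intros]:
  "continuous_on S w \<Longrightarrow> continuous_on S (\<lambda>t. (M::real^'a^'b) *v w t)"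
  by (rule bounded_linear.continuous_on[OF matrix_vector_mul_bounded_linear])

lemma quadratic_form_bounded: "\<exists>K>0. \<forall>x. \<bar>x \<bullet> ((M::real^'n^'n) *v x)\<bar> \<le> K * norm x ^ 2"
proof -
  obtain K where K: "K > 0" "\<And>x. norm (M *v x) \<le> norm x * K"
    using bounded_linear.pos_bounded[OF matrix_vector_mul_bounded_linear[of M]] by blast
  have "\<bar>x \<bullet> (M *v x)\<bar> \<le> K * norm x ^ 2" for x
  proof -
    have "\<bar>x \<bullet> (M *v x)\<bar> \<le> norm x * norm (M *v x)" by (rule Cauchy_Schwarz_ineq2)
    also have "\<dots> \<le> norm x * (norm x * K)" using K(2) by (simp add: mult_left_mono)
    finally show ?thesis by (simp add: power2_eq_square mult_ac)
  qed
  with K show ?thesis by blast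
qed

lemma pos_def_quadratic_form_coercive:
  assumes "pos_def (Q::real^'n^'n)"
  shows "\<exists>\<mu>>0. \<forall>x. \<mu> * norm x ^ 2 \<le> x \<bullet> (Q *v x)"
proof -
  define f where "f x = x \<bullet> (Q *v x)" for x :: "real^'n"
  have cf: "continuous_on (sphere 0 1) f"
    unfolding f_def by (intro continuous_intros)
  have "sphere (0::real^'n) 1 \<noteq> {}"
    using norm_axis_1[of undefined] by (metis dist_0_norm empty_iff mem_sphere)
  then obtain x0 where x0: "x0 \<in> sphere 0 1" "\<forall>y\<in>sphere 0 1. f x0 \<le> f y"
    using continuous_attains_inf[OF compact_sphere _ cf] by blast
  have "x0 \<noteq> 0" using x0(1) by auto
  then have "f x0 > 0" using assms unfolding pos_def_def f_def by blast
  moreover have "f x0 * norm x ^ 2 \<le> x \<bullet> (Q *v x)" for x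
  proof (cases "x = 0")
    case False
    define y where "y = (1 / norm x) *\<^sub>R x"
    have y: "y \<in> sphere 0 1" using False by (simp add: y_def)
    have x: "x = norm x *\<^sub>R y" using False by (simp add: y_def)
    have "x \<bullet> (Q *v x) = norm x ^ 2 * f y"
      by (subst (1 2) x) (simp add: f_def matrix_vector_mult_scaleR power2_eq_square)
    also have "\<dots> \<ge> norm x ^ 2 * f x0" using x0(2) y by (simp add: mult_left_mono)
    finally show ?thesis by (simp add: mult.commute)
  qed simp
  ultimately show ?thesis by blast
qed

definition vcat :: "real^'a \<Rightarrow> real^'b \<Rightarrow> real^('a+'b)" where
  "vcat x y = (\<chi> i. case i of Inl a \<Rightarrow> x $ a | Inr b \<Rightarrow> y $ b)"

lemma vcat_nth [simp]: "vcat x y $ Inl a = x $ a" "vcat x y $ Inr b = y $ b"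
  by (simp_all add: vcat_def)

lemma inner_vcat: "vcat x y \<bullet> vcat x' y' = x \<bullet> x' + y \<bullet> y'"
  by (simp add: inner_vec_def sum_UNIV_Plus)

lemma norm_vcat_power2: "norm (vcat x y) ^ 2 = norm x ^ 2 + norm y ^ 2"
  by (simp add: power2_norm_eq_inner inner_vcat)

section \<open>Derivatives and linear differential equations\<close>

lemma vec_has_vector_derivativeI:
  fixes f :: "real \<Rightarrow> real^'k"
  assumes "\<And>i. ((\<lambda>t. f t $ i) has_real_derivative (f' $ i)) (at t within S)"
  shows "(f has_vector_derivative f') (at t within S)"
  unfolding has_vector_derivative_def
proof (subst has_derivative_componentwise_within, intro ballI)
  fix b :: "real^'k" assume "b \<in> Basis"
  then obtain i where b: "b = axis i 1" using axis_inverse by blast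
  have "((\<lambda>t. f t $ i) has_derivative (\<lambda>h. f' $ i * h)) (at t within S)"
    using assms[of i] by (simp add: has_field_derivative_def)
  then show "((\<lambda>x. f x \<bullet> b) has_derivative (\<lambda>x. x *\<^sub>R f' \<bullet> b)) (at t within S)"
    by (simp add: b inner_axis mult.commute)
qed

lemma vec_nth_has_real_derivative:
  "(f has_vector_derivative f') F \<Longrightarrow> ((\<lambda>t. f t $ i) has_real_derivative (f' $ i)) F"
  using bounded_linear.has_vector_derivative[OF bounded_linear_vec_nth]
  by (simp add: has_real_derivative_iff_has_vector_derivative)

lemma has_real_derivative_quadratic_form:
  fixes P :: "real^'k^'k"
  assumes P: "sym_mat P" and w: "(w has_vector_derivative w') (at t)"
  shows "((\<lambda>t. w t \<bullet> (P *v w t)) has_real_derivative 2 * (w t \<bullet> (P *v w'))) (at t)"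
proof -
  have "((\<lambda>t. w t \<bullet> (P *v w t)) has_derivative
      (\<lambda>h. w t \<bullet> (h *\<^sub>R (P *v w')) + (h *\<^sub>R w') \<bullet> (P *v w t))) (at t)"
    using has_derivative_inner[OF w[unfolded has_vector_derivative_def]
        bounded_linear.has_vector_derivative[OF matrix_vector_mul_bounded_linear w,
          of P, unfolded has_vector_derivative_def]] .
  moreover have "(\<lambda>h. w t \<bullet> (h *\<^sub>R (P *v w')) + (h *\<^sub>R w') \<bullet> (P *v w t))
      = (\<lambda>h. (2 * (w t \<bullet> (P *v w'))) * h)"
    using sym_mat_inner_commute[OF P, of w' "w t"] by (auto simp: algebra_simps)
  ultimately show ?thesis by (simp add: has_field_derivative_def)
qed

text \<open>The solution is the exponential series \<open>\<Sum>n. t\<^sup>n / n! \<cdot> M\<^sup>n z\<^sub>0\<close>, differentiated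
  termwise in each component.\<close>

lemma linear_ode_solution_exists:
  fixes M :: "real^'k^'k" and z0 :: "real^'k"
  shows "\<exists>z. z 0 = z0 \<and> (\<forall>t. (z has_vector_derivative M *v z t) (at t))"
proof -
  define v where "v n = ((\<lambda>x. M *v x) ^^ n) z0" for n
  have v_Suc: "v (Suc n) = M *v v n" for n by (simp add: v_def)
  obtain K where K: "K > 0" "\<And>x. norm (M *v x) \<le> norm x * K"
    using bounded_linear.pos_bounded[OF matrix_vector_mul_bounded_linear[of M]] by blast
  have norm_v: "norm (v n) \<le> K^n * norm z0" for n
  proof (induction n)
    case (Suc n)
    have "norm (v (Suc n)) \<le> norm (v n) * K" using K(2) v_Suc by simp
    also have "\<dots> \<le> K^n * norm z0 * K" using Suc K(1) by (simp add: mult_right_mono)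
    finally show ?case by (simp add: mult_ac)
  qed (simp add: v_def)
  define c where "c i n = v n $ i / fact n" for i n
  have summable: "summable (\<lambda>n. c i n * y^n)" for i y
  proof (rule summable_comparison_test)
    show "summable (\<lambda>n. norm z0 * (inverse (fact n) * (K * \<bar>y\<bar>)^n))"
      by (rule summable_mult[OF summable_exp])
    have "norm (c i n * y ^ n) \<le> norm z0 * (inverse (fact n) * (K * \<bar>y\<bar>) ^ n)" for n
    proof -
      have "norm (c i n * y ^ n) = \<bar>v n $ i\<bar> / fact n * \<bar>y\<bar>^n"
        by (simp add: c_def abs_mult power_abs)
      also have "\<dots> \<le> K^n * norm z0 / fact n * \<bar>y\<bar>^n"
        using order_trans[OF component_le_norm_cart norm_v]
        by (intro mult_right_mono divide_right_mono) auto
      finally show ?thesis by (simp add: field_simps power_mult_distrib)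
    qed
    then show "\<exists>N. \<forall>n\<ge>N. norm (c i n * y ^ n) \<le> norm z0 * (inverse (fact n) * (K * \<bar>y\<bar>) ^ n)"
      by blast
  qed
  define z where "z t = (\<chi> i. \<Sum>n. c i n * t^n)" for t
  have "(\<Sum>n. c i n * 0^n) = c i 0" for i by (rule powser_zero)
  then have "z 0 = z0" by (simp add: z_def c_def v_def vec_eq_iff)
  moreover have "(z has_vector_derivative M *v z t) (at t)" for t
  proof (rule vec_has_vector_derivativeI)
    fix i
    have "(M *v z t) $ i = (\<Sum>j\<in>UNIV. \<Sum>n. M $ i $ j * (c j n * t^n))"
      by (simp add: matrix_vector_mult_def z_def suminf_mult summable)
    also have "\<dots> = (\<Sum>n. \<Sum>j\<in>UNIV. M $ i $ j * (c j n * t^n))"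
      by (rule suminf_sum[symmetric]) (simp add: summable_mult summable)
    also have "\<dots> = (\<Sum>n. diffs (c i) n * t^n)"
    proof (rule suminf_cong)
      fix n
      have "diffs (c i) n = of_nat (Suc n) * (v (Suc n) $ i / (of_nat (Suc n) * fact n))"
        by (simp add: diffs_def c_def del: of_nat_Suc)
      also have "\<dots> = (M *v v n) $ i / fact n" by (simp add: v_Suc del: of_nat_Suc)
      finally show "(\<Sum>j\<in>UNIV. M $ i $ j * (c j n * t^n)) = diffs (c i) n * t^n"
        by (simp add: c_def matrix_vector_mult_def sum_distrib_left sum_distrib_right
            sum_divide_distrib mult_ac)
    qed
    finally show "((\<lambda>t. z t $ i) has_real_derivative (M *v z t) $ i) (at t)"
      using termdiffs_strong_converges_everywhere[OF summable] by (simp add: z_def)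
  qed
  ultimately show ?thesis by blast
qed

lemma continuous_on_vcat:
  fixes f :: "'s::topological_space \<Rightarrow> real^'a" and y :: "real^'b"
  shows "continuous_on S f \<Longrightarrow> continuous_on S (\<lambda>t. vcat (f t) y)"
  unfolding vcat_def
proof (intro continuous_on_vec_lambda)
  fix i :: "'a + 'b"
  show "continuous_on S f \<Longrightarrow> continuous_on S (\<lambda>t. case i of Inl a \<Rightarrow> f t $ a | Inr b \<Rightarrow> y $ b)"
    by (cases i) (auto intro: bounded_linear.continuous_on[OF bounded_linear_vec_nth])
qed

lemma has_vector_derivative_vcat:
  fixes f :: "real \<Rightarrow> real^'a" and y :: "real^'b"
  shows "(f has_vector_derivative f') (at t) \<Longrightarrow> ((\<lambda>t. vcat (f t) y) has_vector_derivative vcat f' 0) (at t)"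
proof (rule vec_has_vector_derivativeI)
  fix i :: "'a + 'b"
  show "(f has_vector_derivative f') (at t) \<Longrightarrow>
      ((\<lambda>t. vcat (f t) y $ i) has_real_derivative vcat f' 0 $ i) (at t)"
    by (cases i) (auto intro: vec_nth_has_real_derivative)
qed

text \<open>An affine system \<open>x' = M x + c\<close> is the upper half of the linear system
  \<open>(x, c)' = (M x + c, 0)\<close>.\<close>

lemma affine_ode_solution_exists:
  fixes M :: "real^'n^'n" and c x0 :: "real^'n"
  shows "\<exists>x. x 0 = x0 \<and> (\<forall>t. (x has_vector_derivative M *v x t + c) (at t))"
proof -
  let ?N = "block M (mat 1) (0::real^'n^'n) (0::real^'n^'n)"
  obtain z where z0: "z 0 = vcat x0 c" and z': "\<And>t. (z has_vector_derivative ?N *v z t) (at t)"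
    using linear_ode_solution_exists[of "vcat x0 c" ?N] by blast
  have N_Inr: "(?N *v w) $ Inr i = 0" for w i
    by (simp add: matrix_vector_mult_def block_def sum_UNIV_Plus)
  have N_Inl: "(?N *v w) $ Inl i = (M *v (\<chi> j. w $ Inl j)) $ i + w $ Inr i" for w i
    by (simp add: matrix_vector_mult_def block_def sum_UNIV_Plus mat_def
        if_distrib[of "\<lambda>a. a * _"] cong: if_cong)
  have z_Inr: "z t $ Inr i = c $ i" for t i
  proof -
    have "\<forall>s. ((\<lambda>t. z t $ Inr i) has_real_derivative 0) (at s)"
      using vec_nth_has_real_derivative[OF z', where i = "Inr i"] N_Inr by simp
    then have "z t $ Inr i = z 0 $ Inr i" by (rule DERIV_isconst_all)
    then show ?thesis using z0 by simp
  qed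
  define x where "x t = (\<chi> j. z t $ Inl j)" for t
  have "x 0 = x0" using z0 by (simp add: x_def vec_eq_iff)
  moreover have "(x has_vector_derivative M *v x t + c) (at t)" for t
    by (rule vec_has_vector_derivativeI)
       (use vec_nth_has_real_derivative[OF z', where i = "Inl _"] N_Inl z_Inr in \<open>simp add: x_def\<close>)
  ultimately show ?thesis by blast
qed

section \<open>Completing the square along a trajectory\<close>

lemma riccati_complete_square:
  fixes A P Q :: "real^'k^'k" and B :: "real^'m^'k" and R :: "real^'m^'m"
  assumes P: "sym_mat P" and R: "sym_mat R" "invertible R" and ric: "riccati A B Q R P"
  defines "G \<equiv> matrix_inv R ** transpose B ** P"
  shows "2 * (w \<bullet> (P *v (A *v w + B *v v))) + w \<bullet> (Q *v w) + v \<bullet> (R *v v)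
       = (v + G *v w) \<bullet> (R *v (v + G *v w))"
proof -
  let ?Ri = "matrix_inv R"
  have "w \<bullet> ((transpose A ** P + P ** A - P ** B ** ?Ri ** transpose B ** P + Q) *v w) = 0"
    using ric unfolding riccati_def by simp
  then have ric_w: "w \<bullet> (transpose A *v (P *v w)) + w \<bullet> (P *v (A *v w))
      - w \<bullet> (P *v (B *v (?Ri *v (transpose B *v (P *v w))))) + w \<bullet> (Q *v w) = 0"
    by (simp add: matrix_vector_mult_add_rdistrib matrix_vector_mult_diff_rdistrib
        inner_add_right inner_diff_right matrix_vector_mul_assoc[symmetric])
  have transpose_A: "w \<bullet> (transpose A *v (P *v w)) = w \<bullet> (P *v (A *v w))"
    using inner_matrix_vector_transpose[of w "transpose A" "P *v w"] sym_mat_inner_commute[OF P]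
    by (simp only: transpose_transpose)
  have RG: "R *v (G *v w) = transpose B *v (P *v w)"
    using matrix_mul_matrix_inv[OF R(2)]
    by (simp add: G_def matrix_vector_mul_assoc matrix_mul_assoc matrix_mul_lid)
  have cross: "v \<bullet> (R *v (G *v w)) = w \<bullet> (P *v (B *v v))"
    using inner_matrix_vector_transpose[of v "transpose B" "P *v w"] sym_mat_inner_commute[OF P]
    by (simp only: RG transpose_transpose)
  have cross': "(G *v w) \<bullet> (R *v v) = v \<bullet> (R *v (G *v w))"
    using sym_mat_inner_commute[OF R(1)] by simp
  have square: "(G *v w) \<bullet> (R *v (G *v w)) = w \<bullet> (P *v (B *v (?Ri *v (transpose B *v (P *v w)))))"
    using inner_matrix_vector_transpose[of "G *v w" "transpose B" "P *v w"] sym_mat_inner_commute[OF P]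
    by (simp only: RG transpose_transpose) (simp add: G_def matrix_vector_mul_assoc[symmetric])
  have "(v + G *v w) \<bullet> (R *v (v + G *v w)) = v \<bullet> (R *v v) + v \<bullet> (R *v (G *v w))
     + (G *v w) \<bullet> (R *v v) + (G *v w) \<bullet> (R *v (G *v w))"
    by (simp add: matrix_vector_right_distrib inner_add_left inner_add_right)
  moreover have "w \<bullet> (P *v (A *v w + B *v v)) = w \<bullet> (P *v (A *v w)) + w \<bullet> (P *v (B *v v))"
    by (simp add: matrix_vector_right_distrib inner_add_right)
  ultimately show ?thesis
    using ric_w transpose_A cross cross' square by linarith
qed

text \<open>The excess \<open>S\<close> is the integral of \<open>|v + G w|\<^sub>R\<^sup>2\<close>, \<open>G = R\<^sup>-\<^sup>1 B\<^sup>T P\<close>.\<close>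

lemma riccati_dissipation_integral:
  fixes A Q P :: "real^'k^'k" and B :: "real^'m^'k" and R :: "real^'m^'m"
    and w :: "real \<Rightarrow> real^'k" and v :: "real \<Rightarrow> real^'m"
  assumes P: "sym_mat P" and R: "sym_mat R" "pos_def R" and ric: "riccati A B Q R P"
    and T: "0 \<le> T" and D: "finite D" and w_cont: "continuous_on {0..T} w"
    and w': "\<And>t. t \<in> {0<..<T} - D \<Longrightarrow> (w has_vector_derivative A *v w t + B *v v t) (at t)"
    and integrable: "(\<lambda>t. w t \<bullet> (Q *v w t) + v t \<bullet> (R *v v t)) integrable_on {0..T}"
  shows "\<exists>S\<ge>0. ((\<lambda>t. w t \<bullet> (Q *v w t) + v t \<bullet> (R *v v t)) has_integral
            w 0 \<bullet> (P *v w 0) - w T \<bullet> (P *v w T) + S) {0..T}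
          \<and> ((\<forall>t\<in>{0<..<T} - D. v t = - ((matrix_inv R ** transpose B ** P) *v w t)) \<longrightarrow> S = 0)"
proof -
  define G where "G = matrix_inv R ** transpose B ** P"
  define V where "V t = w t \<bullet> (P *v w t)" for t
  define l where "l t = w t \<bullet> (Q *v w t) + v t \<bullet> (R *v v t)" for t
  define s where "s t = (v t + G *v w t) \<bullet> (R *v (v t + G *v w t))" for t
  have V': "(V has_vector_derivative s t - l t) (at t)" if "t \<in> {0<..<T} - D" for t
  proof -
    have "(V has_real_derivative 2 * (w t \<bullet> (P *v (A *v w t + B *v v t)))) (at t)"
      unfolding V_def by (rule has_real_derivative_quadratic_form[OF P w'[OF that]])
    moreover have "2 * (w t \<bullet> (P *v (A *v w t + B *v v t))) = s t - l t"
      using riccati_complete_square[OF P R(1) pos_def_imp_invertible[OF R(2)] ric, of "w t" "v t"]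
      by (simp add: s_def l_def G_def)
    ultimately show ?thesis by (simp add: has_real_derivative_iff_has_vector_derivative)
  qed
  have V_cont: "continuous_on {0..T} V"
    unfolding V_def by (intro continuous_intros w_cont)
  obtain I where I: "(l has_integral I) {0..T}"
    using integrable unfolding l_def integrable_on_def by blast
  have s_integral: "(s has_integral (V T - V 0 + I)) {0..T}"
    using has_integral_add[OF fundamental_theorem_of_calculus_interior_strong[OF D T V' V_cont] I]
    by simp
  have "0 \<le> s t" for t
    using pos_def_imp_pos_semidef[OF R(2)] unfolding s_def pos_semidef_def by blast
  then have S_nonneg: "0 \<le> V T - V 0 + I" by (rule has_integral_nonneg[OF s_integral])
  have S_zero: "V T - V 0 + I = 0" if feedback: "\<forall>t\<in>{0<..<T} - D. v t = - (G *v w t)"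
  proof -
    have "(s has_integral 0) {0..T}"
    proof (rule has_integral_spike_finite[where S = "D \<union> {0, T}" and f = "\<lambda>t. 0"])
      show "s t = 0" if "t \<in> {0..T} - (D \<union> {0, T})" for t
        using feedback that by (auto simp: s_def)
    qed (use D in auto)
    then show ?thesis using s_integral has_integral_unique by blast
  qed
  have "(l has_integral (V 0 - V T + (V T - V 0 + I))) {0..T}" using I by simp
  then show ?thesis
    using S_nonneg S_zero unfolding l_def[abs_def] V_def G_def by blast
qed

section \<open>Piecewise continuous inputs and trajectories\<close>

lemma compact_locally_bounded_imp_bounded:
  fixes u :: "'a::metric_space \<Rightarrow> 'b::real_normed_vector"
  assumes "compact K"
    and local: "\<And>t. t \<in> K \<Longrightarrow> \<exists>\<delta>>0. \<exists>C. \<forall>s\<in>K. dist s t < \<delta> \<longrightarrow> norm (u s) \<le> C"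
  shows "\<exists>C. \<forall>t\<in>K. norm (u t) \<le> C"
proof -
  have "\<forall>t\<in>K. \<exists>\<delta>. \<delta> > 0 \<and> (\<exists>C. \<forall>s\<in>K. dist s t < \<delta> \<longrightarrow> norm (u s) \<le> C)"
    using local by blast
  then obtain \<delta> where \<delta>: "\<forall>t\<in>K. \<delta> t > 0 \<and> (\<exists>C. \<forall>s\<in>K. dist s t < \<delta> t \<longrightarrow> norm (u s) \<le> C)"
    by (metis bchoice)
  then obtain C where C: "\<forall>t\<in>K. \<forall>s\<in>K. dist s t < \<delta> t \<longrightarrow> norm (u s) \<le> C t"
    by (metis bchoice)
  obtain F where F: "F \<subseteq> K" "finite F" "K \<subseteq> (\<Union>t\<in>F. ball t (\<delta> t))"
  proof (rule compactE_image[OF \<open>compact K\<close>, of K "\<lambda>t. ball t (\<delta> t)"])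
    show "K \<subseteq> (\<Union>t\<in>K. ball t (\<delta> t))" using \<delta> by force
  qed auto
  have "norm (u s) \<le> (\<Sum>t\<in>F. \<bar>C t\<bar>)" if s: "s \<in> K" for s
  proof -
    obtain t where t: "t \<in> F" "s \<in> ball t (\<delta> t)" using F(3) s by blast
    then have "norm (u s) \<le> \<bar>C t\<bar>" using C F(1) s by (force simp: dist_commute)
    also have "\<dots> \<le> (\<Sum>t\<in>F. \<bar>C t\<bar>)" by (rule member_le_sum[OF t(1) _ F(2)]) simp
    finally show ?thesis .
  qed
  then show ?thesis by blast
qed

lemma norm_le_of_dist_lt_1:
  fixes x l :: "'a::real_normed_vector"
  shows "dist x l < 1 \<Longrightarrow> norm x \<le> norm l + 1"
  using norm_triangle_sub[of x l] by (simp add: dist_norm)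

text \<open>Near a jump point the one-sided limits bound \<open>u\<close> on either side; at \<open>t = 0\<close> only the
  right limit is needed, since points left of \<open>0\<close> lie outside \<open>[0, T]\<close>.\<close>

lemma piecewise_continuous_locally_bounded:
  fixes u :: "real \<Rightarrow> 'a::real_normed_vector"
  assumes pc: "piecewise_continuous u" and t: "t \<in> {0..T}"
  shows "\<exists>\<delta>>0. \<exists>C. \<forall>s\<in>{0..T}. dist s t < \<delta> \<longrightarrow> norm (u s) \<le> C"
proof -
  obtain D where cont: "\<forall>t\<in>{0..T} - D. continuous (at t within {0..}) u"
    and lims: "\<forall>d\<in>D. (d > 0 \<longrightarrow> (\<exists>l. (u \<longlongrightarrow> l) (at_left d))) \<and> (\<exists>l. (u \<longlongrightarrow> l) (at_right d))"
    using pc t unfolding piecewise_continuous_def by (meson atLeastAtMost_iff order_trans)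
  show ?thesis
  proof (cases "t \<in> D")
    case False
    then have "continuous (at t within {0..}) u" using cont t by blast
    then obtain d where d: "d > 0" "\<forall>s\<in>{0..}. dist s t < d \<longrightarrow> dist (u s) (u t) < 1"
      unfolding continuous_within_eps_delta by (meson zero_less_one)
    show ?thesis
    proof (intro exI conjI ballI impI)
      fix s assume "s \<in> {0..T}" "dist s t < d"
      then show "norm (u s) \<le> norm (u t) + 1" using d(2) by (auto intro: norm_le_of_dist_lt_1)
    qed (rule d(1))
  next
    case True
    then obtain l2 where "(u \<longlongrightarrow> l2) (at_right t)" using lims by blast
    then have "eventually (\<lambda>s. dist (u s) l2 < 1) (at_right t)" by (simp add: tendstoD)
    then obtain b where b: "b > t" "\<And>s. t < s \<Longrightarrow> s < b \<Longrightarrow> dist (u s) l2 < 1"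
      unfolding eventually_at_right_field by blast
    obtain a l1 where a: "a < t" "\<And>s. s \<in> {0..T} \<Longrightarrow> a < s \<Longrightarrow> s < t \<Longrightarrow> dist (u s) l1 < 1"
    proof (cases "t > 0")
      case True
      then obtain l1 where "(u \<longlongrightarrow> l1) (at_left t)" using lims \<open>t \<in> D\<close> by blast
      then have "eventually (\<lambda>s. dist (u s) l1 < 1) (at_left t)" by (simp add: tendstoD)
      then show ?thesis using that unfolding eventually_at_left_field by blast
    next
      case False
      then show ?thesis using that[of "t - 1" 0] t by auto
    qed
    have "norm (u s) \<le> max (norm (u t)) (max (norm l1 + 1) (norm l2 + 1))"
      if s: "s \<in> {0..T}" "dist s t < min (t - a) (b - t)" for s
    proof (cases s t rule: linorder_cases)
      case less
      then show ?thesis using s a(2)[OF s(1) _ less] norm_le_of_dist_lt_1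
        by (fastforce simp: dist_real_def)
    next
      case greater
      then show ?thesis using s b(2)[OF greater] norm_le_of_dist_lt_1
        by (fastforce simp: dist_real_def)
    qed simp
    then show ?thesis
      using a(1) b(1)
      by (intro exI[of _ "min (t - a) (b - t)"] conjI
          exI[of _ "max (norm (u t)) (max (norm l1 + 1) (norm l2 + 1))"]) auto
  qed
qed

lemma piecewise_continuous_bounded:
  fixes u :: "real \<Rightarrow> 'a::real_normed_vector"
  assumes "piecewise_continuous u"
  shows "\<exists>C. \<forall>t\<in>{0..T}. norm (u t) \<le> C"
  using compact_locally_bounded_imp_bounded[OF compact_Icc]
    piecewise_continuous_locally_bounded[OF assms] by blast

lemma continuous_on_imp_piecewise_continuous:
  assumes "continuous_on UNIV u" shows "piecewise_continuous u"
  unfolding piecewise_continuous_def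
proof (intro allI impI exI[of _ "{}"] conjI ballI)
  fix t :: real
  have "continuous (at t within UNIV) u"
    using assms continuous_on_eq_continuous_within by blast
  then show "continuous (at t within {0..}) u" by (rule continuous_within_subset) simp
qed auto

lemma trajectory_at_0:
  assumes "trajectory A B x0 u y" shows "y 0 = x0"
proof -
  have "((\<lambda>s. A *v y s + B *v u s) has_integral (y 0 - x0)) {0..0}"
    using assms unfolding trajectory_def by auto
  then have "((\<lambda>s. A *v y s + B *v u s) has_integral (y 0 - x0)) {0}" by simp
  then have "y 0 - x0 = 0" using has_integral_refl(2) has_integral_unique by blast
  then show ?thesis by simp
qed

text \<open>Off the finitely many jumps of \<open>u\<close> the integrand of the trajectory equation is continuous,
  so there \<open>y\<close> is classically differentiable.\<close>

lemma trajectory_regularity: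
  fixes A :: "real^'n^'n" and B :: "real^'m^'n"
  assumes y: "trajectory A B x0 u y" and u: "piecewise_continuous u" and T: "0 \<le> T"
  obtains D where "finite D" "continuous_on {0..T} y" "continuous_on ({0..T} - D) u"
    "\<And>t. t \<in> {0<..<T} - D \<Longrightarrow> (y has_vector_derivative A *v y t + B *v u t) (at t)"
proof -
  define f where "f s = A *v y s + B *v u s" for s
  obtain D where D: "finite D" and u_cont: "\<forall>t\<in>{0..T} - D. continuous (at t within {0..}) u"
    using u T unfolding piecewise_continuous_def by blast
  have f_integral: "(f has_integral (y t - x0)) {0..t}" if "t \<ge> 0" for t
    using y that unfolding trajectory_def f_def[abs_def] by blast
  have f_integrable: "f integrable_on {0..T}" using f_integral[OF T] by blast
  have y_eq: "y t = x0 + integral {0..t} f" if "t \<in> {0..T}" for t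
    using integral_unique[OF f_integral, of t] that by simp
  have y_cont: "continuous_on {0..T} y"
    by (rule continuous_on_eq[OF continuous_on_add[OF continuous_on_const
          indefinite_integral_continuous_1[OF f_integrable]]]) (simp add: y_eq)
  have "continuous_on ({0..T} - D) u"
    unfolding continuous_on_eq_continuous_within
    using u_cont by (auto intro: continuous_within_subset)
  moreover have "(y has_vector_derivative f t) (at t)" if t: "t \<in> {0<..<T} - D" for t
  proof -
    have "continuous (at t within ({0..T} - D)) y"
      using y_cont t continuous_on_eq_continuous_within continuous_within_subset
      by (metis Diff_iff Diff_subset greaterThanLessThan_iff atLeastAtMost_iff less_imp_le)
    moreover have "continuous (at t within ({0..T} - D)) u"
      by (rule continuous_within_subset[of _ "{0..}"]) (use u_cont t in auto)
    ultimately have f_cont: "continuous (at t within ({0..T} - D)) f"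
      unfolding f_def
      by (intro continuous_add bounded_linear.continuous[OF matrix_vector_mul_bounded_linear])
    have "((\<lambda>s. integral {0..s} f) has_vector_derivative f t) (at t within ({0..T} - D))"
      by (rule integral_has_vector_derivative_continuous_at[OF f_integrable _ D f_cont]) (use t in auto)
    moreover have "at t within ({0..T} - D) = at t"
      by (rule at_within_open_subset[where S = "{0<..<T} - D"])
         (use t D in \<open>auto intro: open_Diff finite_imp_closed\<close>)
    ultimately have "((\<lambda>s. x0 + integral {0..s} f) has_vector_derivative f t) (at t)"
      by (simp add: has_vector_derivative_add_const add.commute[of x0])
    then show ?thesis
      by (rule has_vector_derivative_transform_within_open[where S = "{0<..<T}"])
         (use t y_eq in auto)
  qed
  ultimately show ?thesis using that D y_cont unfolding f_def by blast
qed

lemma bounded_continuous_off_finite_integrable_on: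
  fixes g :: "real \<Rightarrow> real"
  assumes D: "finite D" and g: "continuous_on ({0..T} - D) g" and bound: "\<forall>t\<in>{0..T}. \<bar>g t\<bar> \<le> C"
  shows "g integrable_on {0..T}"
proof -
  have "{0..T} - D \<in> lmeasurable"
    using D negligible_finite negligible_imp_sets by (intro fmeasurable_Diff) auto
  moreover have "g \<in> borel_measurable (lebesgue_on ({0..T} - D))"
    by (rule continuous_imp_measurable_on_sets_lebesgue[OF g]) (use calculation in auto)
  ultimately have "g integrable_on ({0..T} - D)"
    by (intro measurable_bounded_by_integrable_imp_integrable[OF _ integrable_on_const[of _ C]])
       (use bound in auto)
  then show ?thesis
    by (rule integrable_spike_set) (auto intro: negligible_subset[OF negligible_finite[OF D]])
qed

lemma nn_integral_Ici_le_of_Icc_le: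
  fixes f :: "real \<Rightarrow> ennreal"
  assumes f: "f \<in> borel_measurable borel"
    and le: "\<And>n::nat. (\<integral>\<^sup>+t. f t * indicator {0..real n} t \<partial>lborel) \<le> c"
  shows "(\<integral>\<^sup>+t. f t * indicator {0..} t \<partial>lborel) \<le> c"
proof -
  have "(\<lambda>n. \<integral>\<^sup>+t. f t * indicator {0..real n} t \<partial>lborel)
      \<longlonglongrightarrow> (\<integral>\<^sup>+t. f t * indicator {0..} t \<partial>lborel)"
  proof (rule nn_integral_LIMSEQ)
    show "incseq (\<lambda>n t. f t * indicator {0..real n} t)"
      unfolding incseq_def le_fun_def by (auto simp: indicator_def)
    have "(\<lambda>t. f t * indicator {0..real n} t) \<in> borel_measurable borel" for n
      using f by (intro borel_measurable_times_ennreal borel_measurable_indicator) simp_all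
    then show "(\<lambda>t. f t * indicator {0..real n} t) \<in> borel_measurable lborel" for n
      by simp
    show "(\<lambda>n. f t * indicator {0..real n} t) \<longlonglongrightarrow> f t * indicator {0..} t" for t
    proof (rule tendsto_eventually)
      have "f t * indicator {0..real n} t = f t * indicator {0..} t" if "nat \<lceil>t\<rceil> \<le> n" for n
      proof -
        have "t \<le> real n" using that by linarith
        then show ?thesis by (auto simp: indicator_def)
      qed
      then show "\<forall>\<^sub>F n in sequentially. f t * indicator {0..real n} t = f t * indicator {0..} t"
        unfolding eventually_sequentially by blast
    qed
  qed
  then show ?thesis using le by (intro LIMSEQ_le_const2) auto
qed

lemma nn_integral_Ici_eq_top:
  fixes f :: "real \<Rightarrow> ennreal"
  assumes c: "c > 0" and ge: "\<And>t. T\<^sub>0 \<le> t \<Longrightarrow> ennreal c \<le> f t"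
  shows "(\<integral>\<^sup>+t. f t * indicator {0..} t \<partial>lborel) = \<infinity>"
proof (rule ccontr)
  define T where "T = max T\<^sub>0 0"
  assume "(\<integral>\<^sup>+t. f t * indicator {0..} t \<partial>lborel) \<noteq> \<infinity>"
  then obtain I where I: "0 \<le> I" "(\<integral>\<^sup>+t. f t * indicator {0..} t \<partial>lborel) = ennreal I"
    by (cases "\<integral>\<^sup>+t. f t * indicator {0..} t \<partial>lborel" rule: ennreal_cases) auto
  obtain n :: nat where n: "I / c < real n" using reals_Archimedean2 by blast
  have "ennreal (c * real n) = (\<integral>\<^sup>+t. ennreal c * indicator {T..T + real n} t \<partial>lborel)"
    using c by (simp add: nn_integral_cmult_indicator emeasure_lborel_Icc_eq ennreal_mult)
  also have "\<dots> \<le> (\<integral>\<^sup>+t. f t * indicator {0..} t \<partial>lborel)"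
    using ge by (intro nn_integral_mono) (auto simp: T_def indicator_def)
  finally have "c * real n \<le> I" using I by (simp add: ennreal_le_iff)
  with n c show False by (simp add: field_simps)
qed

section \<open>The extended system\<close>

lemma matrix_mul_uminus_left: "(- A) ** B = - ((A::real^'a^'b) ** (B::real^'c^'a))"
  by (simp add: vec_eq_iff matrix_matrix_mult_def sum_negf)

lemma matrix_vector_mult_uminus_left: "(- A) *v x = - ((A::real^'a^'b) *v x)"
  by (simp add: vec_eq_iff matrix_vector_mult_def sum_negf)

lemma transpose_vblock_zero_mult_vector:
  "transpose (vblock B (0::real^'m^'n2)) *v z = transpose B *v (\<chi> a. z $ Inl a)"
  by (simp add: vec_eq_iff matrix_vector_mult_def transpose_def vblock_def sum_UNIV_Plus)

lemma matrix_vector_mult_vcat_Inl: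
  "(\<chi> a. (P *v vcat x r) $ Inl a) = blk11 P *v x + blk12 P *v r"
  by (simp add: vec_eq_iff matrix_vector_mult_def blk11_def blk12_def sum_UNIV_Plus)

lemma sum_times_delta: "(\<Sum>j\<in>UNIV. (c::real) * (x $ j * (if a = j then 1 else 0))) = c * x $ a"
proof -
  have "(\<Sum>j\<in>UNIV. c * (x $ j * (if a = j then 1 else 0))) = (\<Sum>j\<in>UNIV. if a = j then c * x $ j else 0)"
    by (rule sum.cong) auto
  then show ?thesis by simp
qed

lemma extended_dynamics:
  fixes A :: "real^'n^'n" and B :: "real^'m^'n"
  shows "block (A - \<alpha> *\<^sub>R mat 1) 0 0 (- \<alpha> *\<^sub>R mat 1) *v vcat x r + vblock B (0::real^'m^'n) *v u
    = vcat (A *v x + B *v u) 0 - \<alpha> *\<^sub>R vcat x r"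
  unfolding vec_eq_iff
proof
  fix i :: "'n + 'n"
  show "(block (A - \<alpha> *\<^sub>R mat 1) 0 0 (- \<alpha> *\<^sub>R mat 1) *v vcat x r + vblock B 0 *v u) $ i
      = (vcat (A *v x + B *v u) 0 - \<alpha> *\<^sub>R vcat x r) $ i"
    by (cases i) (simp_all add: matrix_vector_mult_def block_def vblock_def sum_UNIV_Plus mat_def
        algebra_simps sum_subtractf sum_negf sum_distrib_left sum_times_delta)
qed

lemma extended_quadratic_cost:
  fixes Q :: "real^'n^'n"
  shows "vcat x r \<bullet> (block Q (- Q) (- Q) Q *v vcat x r) = (x - r) \<bullet> (Q *v (x - r))"
proof -
  have "block Q (- Q) (- Q) Q *v vcat x r = vcat (Q *v (x - r)) (Q *v (r - x))"
    unfolding vec_eq_iff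
  proof
    fix i :: "'n + 'n"
    show "(block Q (- Q) (- Q) Q *v vcat x r) $ i = vcat (Q *v (x - r)) (Q *v (r - x)) $ i"
      by (cases i) (simp_all add: matrix_vector_mult_def block_def sum_UNIV_Plus algebra_simps
          sum_subtractf sum_negf)
  qed
  then show ?thesis
    by (simp add: inner_vcat matrix_vector_mult_diff_distrib inner_diff_left inner_diff_right)
qed

lemma extended_feedback:
  fixes B :: "real^'m^'n" and R :: "real^'m^'m" and P :: "real^('n+'n)^('n+'n)"
  shows "(- matrix_inv R ** transpose B ** blk11 P) *v x + (- matrix_inv R ** transpose B ** blk12 P) *v r
    = - ((matrix_inv R ** transpose (vblock B (0::real^'m^'n)) ** P) *v vcat x r)"
proof -
  have "(matrix_inv R ** transpose (vblock B (0::real^'m^'n)) ** P) *v vcat x r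
      = matrix_inv R *v (transpose B *v (blk11 P *v x + blk12 P *v r))"
    by (simp add: matrix_vector_mul_assoc[symmetric] transpose_vblock_zero_mult_vector
        matrix_vector_mult_vcat_Inl del: transpose_matrix_vector)
  then show ?thesis
    by (simp add: matrix_vector_mul_assoc[symmetric] matrix_vector_right_distrib
        matrix_vector_mult_uminus_left matrix_mul_uminus_left matrix_vector_mult_add_rdistrib
        del: transpose_matrix_vector)
qed

section \<open>The discounted tracking problem\<close>

locale discounted_tracking =
  fixes A :: "real^'n^'n" and B :: "real^'m^'n" and Q :: "real^'n^'n" and R :: "real^'m^'m"
    and r :: "real^'n" and \<alpha> :: real and P :: "real^('n+'n)^('n+'n)"
  assumes Q: "sym_mat Q" "pos_def Q" and R: "sym_mat R" "pos_def R" and alpha: "\<alpha> > 0"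
    and P_sym: "sym_mat P" and P_psd: "pos_semidef P"
    and P_riccati: "riccati (block (A - \<alpha> *\<^sub>R mat 1) 0 0 (- \<alpha> *\<^sub>R mat 1)) (vblock B (0::real^'m^'n))
                      (block Q (- Q) (- Q) Q) R P"
begin

abbreviation "A_ext \<equiv> block (A - \<alpha> *\<^sub>R mat 1) 0 0 (- \<alpha> *\<^sub>R mat 1)"
abbreviation "B_ext \<equiv> vblock B (0::real^'m^'n)"
abbreviation "Q_ext \<equiv> block Q (- Q) (- Q) Q"

definition feedback :: "real^'n \<Rightarrow> real^'m" where
  "feedback x = (- matrix_inv R ** transpose B ** blk11 P) *v x
              + (- matrix_inv R ** transpose B ** blk12 P) *v r"

definition running_cost :: "(real \<Rightarrow> real^'n) \<Rightarrow> (real \<Rightarrow> real^'m) \<Rightarrow> real \<Rightarrow> real" where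
  "running_cost y u t = exp (-2*\<alpha>*t) * ((y t - r) \<bullet> (Q *v (y t - r)) + u t \<bullet> (R *v u t))"

definition storage :: "real \<Rightarrow> real^'n \<Rightarrow> real" where
  "storage t x = (exp (-\<alpha>*t) *\<^sub>R vcat x r) \<bullet> (P *v (exp (-\<alpha>*t) *\<^sub>R vcat x r))"

lemma cost_eq_running_cost:
  "cost \<alpha> Q R r y u = (\<integral>\<^sup>+t. ennreal (running_cost y u t) * indicator {0..} t \<partial>lborel)"
  unfolding cost_def running_cost_def by (rule refl)

lemma exp_neg_mult_self: "exp (-\<alpha>*t) * exp (-\<alpha>*t) = exp (-2*\<alpha>*t)"
  by (simp flip: exp_add)

lemma Q_nonneg: "0 \<le> x \<bullet> (Q *v x)"
  using pos_def_imp_pos_semidef[OF Q(2)] unfolding pos_semidef_def by blast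

lemma R_nonneg: "0 \<le> x \<bullet> (R *v x)"
  using pos_def_imp_pos_semidef[OF R(2)] unfolding pos_semidef_def by blast

lemma running_cost_nonneg: "0 \<le> running_cost y u t"
  unfolding running_cost_def by (intro mult_nonneg_nonneg add_nonneg_nonneg Q_nonneg R_nonneg) auto

lemma storage_nonneg: "0 \<le> storage t x"
  using P_psd unfolding storage_def pos_semidef_def by blast

lemma storage_eq: "storage t x = exp (-2*\<alpha>*t) * (vcat x r \<bullet> (P *v vcat x r))"
  unfolding storage_def matrix_vector_mult_scaleR inner_scaleR_left inner_scaleR_right
    exp_neg_mult_self[symmetric] by (simp only: mult.assoc)

lemma running_cost_integrable_on:
  assumes y: "trajectory A B x0 u y" and u: "piecewise_continuous u" and T: "0 \<le> T"
  shows "running_cost y u integrable_on {0..T}"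
proof -
  obtain D where D: "finite D" and y_cont: "continuous_on {0..T} y"
    and u_cont: "continuous_on ({0..T} - D) u"
    using trajectory_regularity[OF y u T] by metis
  obtain Cu where Cu: "\<forall>t\<in>{0..T}. norm (u t) \<le> Cu"
    using piecewise_continuous_bounded[OF u] by blast
  have "bounded (y ` {0..T})" by (intro compact_imp_bounded compact_continuous_image y_cont) simp
  then obtain Cy where Cy: "\<forall>t\<in>{0..T}. norm (y t) \<le> Cy" unfolding bounded_iff by blast
  obtain KQ where KQ: "KQ > 0" "\<forall>a. \<bar>a \<bullet> (Q *v a)\<bar> \<le> KQ * norm a ^ 2"
    using quadratic_form_bounded by blast
  obtain KR where KR: "KR > 0" "\<forall>a. \<bar>a \<bullet> (R *v a)\<bar> \<le> KR * norm a ^ 2"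
    using quadratic_form_bounded by blast
  show ?thesis
  proof (rule bounded_continuous_off_finite_integrable_on[OF D])
    have "continuous_on ({0..T} - D) y" using y_cont by (rule continuous_on_subset) auto
    then show "continuous_on ({0..T} - D) (running_cost y u)"
      unfolding running_cost_def[abs_def] by (intro continuous_intros u_cont)
    show "\<forall>t\<in>{0..T}. \<bar>running_cost y u t\<bar> \<le> KQ * (Cy + norm r)^2 + KR * Cu^2"
    proof
      fix t assume t: "t \<in> {0..T}"
      have "\<bar>running_cost y u t\<bar> = running_cost y u t" using running_cost_nonneg by simp
      also have "\<dots> \<le> 1 * ((y t - r) \<bullet> (Q *v (y t - r)) + u t \<bullet> (R *v u t))"
        unfolding running_cost_def using alpha t Q_nonneg R_nonneg
        by (intro mult_right_mono add_nonneg_nonneg) auto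
      also have "\<dots> \<le> KQ * norm (y t - r)^2 + KR * norm (u t)^2"
        using KQ(2)[rule_format, of "y t - r"] KR(2)[rule_format, of "u t"] by simp
      also have "\<dots> \<le> KQ * (Cy + norm r)^2 + KR * Cu^2"
        using KQ(1) KR(1) Cy Cu t norm_triangle_ineq4[of "y t" r]
        by (intro add_mono mult_left_mono power_mono) force+
      finally show "\<bar>running_cost y u t\<bar> \<le> KQ * (Cy + norm r)^2 + KR * Cu^2" .
    qed
  qed
qed

lemma discounted_state_has_vector_derivative:
  assumes "(y has_vector_derivative A *v y t + B *v u t) (at t)"
  shows "((\<lambda>t. exp (-\<alpha>*t) *\<^sub>R vcat (y t) r) has_vector_derivative
           A_ext *v (exp (-\<alpha>*t) *\<^sub>R vcat (y t) r) + B_ext *v (exp (-\<alpha>*t) *\<^sub>R u t)) (at t)"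
proof -
  have "((\<lambda>t. exp (-\<alpha>*t)) has_real_derivative -\<alpha> * exp (-\<alpha>*t)) (at t)"
    by (auto intro!: derivative_eq_intros)
  from has_vector_derivative_scaleR[OF this has_vector_derivative_vcat[OF assms]]
  have "((\<lambda>t. exp (-\<alpha>*t) *\<^sub>R vcat (y t) r) has_vector_derivative
      exp (-\<alpha>*t) *\<^sub>R vcat (A *v y t + B *v u t) 0 + (-\<alpha> * exp (-\<alpha>*t)) *\<^sub>R vcat (y t) r) (at t)"
    by simp
  moreover have "A_ext *v (exp (-\<alpha>*t) *\<^sub>R vcat (y t) r) + B_ext *v (exp (-\<alpha>*t) *\<^sub>R u t)
      = exp (-\<alpha>*t) *\<^sub>R vcat (A *v y t + B *v u t) 0 + (-\<alpha> * exp (-\<alpha>*t)) *\<^sub>R vcat (y t) r"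
  proof -
    have "A_ext *v (exp (-\<alpha>*t) *\<^sub>R vcat (y t) r) + B_ext *v (exp (-\<alpha>*t) *\<^sub>R u t)
        = exp (-\<alpha>*t) *\<^sub>R (vcat (A *v y t + B *v u t) 0 - \<alpha> *\<^sub>R vcat (y t) r)"
      by (simp only: matrix_vector_mult_scaleR scaleR_right_distrib[symmetric] extended_dynamics)
    then show ?thesis by (simp add: algebra_simps)
  qed
  ultimately show ?thesis by (simp only:)
qed

lemma discounted_state_cost:
  "(exp (-\<alpha>*t) *\<^sub>R vcat (y t) r) \<bullet> (Q_ext *v (exp (-\<alpha>*t) *\<^sub>R vcat (y t) r))
     + (exp (-\<alpha>*t) *\<^sub>R u t) \<bullet> (R *v (exp (-\<alpha>*t) *\<^sub>R u t)) = running_cost y u t"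
proof -
  have "(exp (-\<alpha>*t) *\<^sub>R vcat (y t) r) \<bullet> (Q_ext *v (exp (-\<alpha>*t) *\<^sub>R vcat (y t) r))
     + (exp (-\<alpha>*t) *\<^sub>R u t) \<bullet> (R *v (exp (-\<alpha>*t) *\<^sub>R u t))
      = (exp (-\<alpha>*t) * exp (-\<alpha>*t)) * (vcat (y t) r \<bullet> (Q_ext *v vcat (y t) r) + u t \<bullet> (R *v u t))"
    by (simp add: matrix_vector_mult_scaleR algebra_simps)
  then show ?thesis
    by (simp only: exp_neg_mult_self extended_quadratic_cost running_cost_def)
qed

lemma finite_horizon_cost:
  assumes y: "trajectory A B x0 u y" and u: "piecewise_continuous u" and T: "0 \<le> T"
  shows "\<exists>S\<ge>0. (\<integral>\<^sup>+t. ennreal (running_cost y u t) * indicator {0..T} t \<partial>lborel)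
                 = ennreal (storage 0 x0 - storage T (y T) + S)
              \<and> ((\<forall>t. u t = feedback (y t)) \<longrightarrow> S = 0)"
proof -
  define W where "W t = exp (-\<alpha>*t) *\<^sub>R vcat (y t) r" for t
  define v where "v t = exp (-\<alpha>*t) *\<^sub>R u t" for t
  obtain D where D: "finite D" and y_cont: "continuous_on {0..T} y"
    and y': "\<And>t. t \<in> {0<..<T} - D \<Longrightarrow> (y has_vector_derivative A *v y t + B *v u t) (at t)"
    using trajectory_regularity[OF y u T] by metis
  have W_cont: "continuous_on {0..T} W"
    unfolding W_def by (intro continuous_intros continuous_on_vcat y_cont)
  have W': "(W has_vector_derivative A_ext *v W t + B_ext *v v t) (at t)" if "t \<in> {0<..<T} - D" for t
    unfolding W_def v_def by (rule discounted_state_has_vector_derivative) (rule y'[OF that])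
  have cost_W: "(\<lambda>t. W t \<bullet> (Q_ext *v W t) + v t \<bullet> (R *v v t)) = running_cost y u"
    unfolding W_def v_def discounted_state_cost ..
  obtain S where S: "S \<ge> 0"
    and integral: "(running_cost y u has_integral (W 0 \<bullet> (P *v W 0) - W T \<bullet> (P *v W T) + S)) {0..T}"
    and S_feedback: "(\<forall>t\<in>{0<..<T} - D. v t = - ((matrix_inv R ** transpose B_ext ** P) *v W t))
                       \<longrightarrow> S = 0"
    using riccati_dissipation_integral[OF P_sym R P_riccati T D W_cont W']
      running_cost_integrable_on[OF y u T] unfolding cost_W by blast
  have "W 0 \<bullet> (P *v W 0) = storage 0 x0" "W T \<bullet> (P *v W T) = storage T (y T)"
    by (simp_all add: W_def storage_def trajectory_at_0[OF y])
  moreover have "v t = - ((matrix_inv R ** transpose B_ext ** P) *v W t)" if "u t = feedback (y t)" for t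
    using that by (simp add: v_def W_def feedback_def extended_feedback matrix_vector_mult_scaleR)
  ultimately show ?thesis
    using S S_feedback nn_integral_has_integral_lebesgue'[OF running_cost_nonneg integral] by auto
qed

lemma closed_loop_trajectory_exists:
  "\<exists>x. trajectory A B x0 (\<lambda>t. feedback (x t)) x \<and> continuous_on UNIV x"
proof -
  define K where "K = - matrix_inv R ** transpose B ** blk11 P"
  define c where "c = B *v ((- matrix_inv R ** transpose B ** blk12 P) *v r)"
  obtain x where x0: "x 0 = x0" and x': "\<And>t. (x has_vector_derivative (A + B ** K) *v x t + c) (at t)"
    using affine_ode_solution_exists[of x0 "A + B ** K" c] by blast
  have "(A + B ** K) *v x t + c = A *v x t + B *v feedback (x t)" for t
    by (simp add: K_def c_def feedback_def matrix_vector_mult_add_rdistrib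
        matrix_vector_mul_assoc[symmetric] matrix_vector_right_distrib)
  then have x'_feedback: "(x has_vector_derivative A *v x t + B *v feedback (x t)) (at t)" for t
    using x'[of t] by simp
  have "trajectory A B x0 (\<lambda>t. feedback (x t)) x"
    unfolding trajectory_def
  proof (intro allI impI)
    fix t :: real assume "0 \<le> t"
    then show "((\<lambda>s. A *v x s + B *v feedback (x s)) has_integral (x t - x0)) {0..t}"
      using fundamental_theorem_of_calculus[of 0 t x] has_vector_derivative_at_within[OF x'_feedback]
      by (simp add: x0)
  qed
  moreover have "continuous_on UNIV x"
    using x'_feedback has_vector_derivative_continuous continuous_at_imp_continuous_on by blast
  ultimately show ?thesis by blast
qed

lemma continuous_on_feedback: "continuous_on UNIV x \<Longrightarrow> continuous_on UNIV (\<lambda>t. feedback (x t))"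
  unfolding feedback_def by (intro continuous_intros)

lemma feedback_cost_le_storage:
  assumes x: "trajectory A B x0 (\<lambda>t. feedback (x t)) x" and x_cont: "continuous_on UNIV x"
  shows "cost \<alpha> Q R r x (\<lambda>t. feedback (x t)) \<le> ennreal (storage 0 x0)"
  unfolding cost_eq_running_cost
proof (rule nn_integral_Ici_le_of_Icc_le)
  have "continuous_on UNIV (running_cost x (\<lambda>t. feedback (x t)))"
    unfolding running_cost_def[abs_def]
    by (intro continuous_intros continuous_on_feedback x_cont)
  then show "(\<lambda>t. ennreal (running_cost x (\<lambda>t. feedback (x t)) t)) \<in> borel_measurable borel"
    by (intro measurable_compose[OF _ measurable_ennreal] borel_measurable_continuous_onI)
  fix n :: nat
  have u: "piecewise_continuous (\<lambda>t. feedback (x t))"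
    by (intro continuous_on_imp_piecewise_continuous continuous_on_feedback x_cont)
  obtain S where "(\<integral>\<^sup>+t. ennreal (running_cost x (\<lambda>t. feedback (x t)) t) * indicator {0..real n} t \<partial>lborel)
      = ennreal (storage 0 x0 - storage (real n) (x (real n)) + S)" and "S = 0"
    using finite_horizon_cost[OF x u, of "real n"] by auto
  then show "(\<integral>\<^sup>+t. ennreal (running_cost x (\<lambda>t. feedback (x t)) t) * indicator {0..real n} t \<partial>lborel)
      \<le> ennreal (storage 0 x0)"
    using storage_nonneg by (simp add: ennreal_leI)
qed

text \<open>Coercivity of \<open>Q\<close> bounds \<open>|x - r|\<^sup>2\<close>, hence \<open>|(x, r)|\<^sup>2\<close>, by the running cost, except for the
  reference part \<open>|r|\<^sup>2\<close>, which is only damped by the discount.\<close>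

lemma storage_le_running_cost:
  obtains C C' where "C > 0" "\<And>y u t. storage t (y t) \<le> C * running_cost y u t + C' * exp (-2*\<alpha>*t)"
proof -
  obtain \<mu> where \<mu>: "\<mu> > 0" "\<And>z. \<mu> * norm z ^ 2 \<le> z \<bullet> (Q *v z)"
    using pos_def_quadratic_form_coercive[OF Q(2)] by blast
  obtain K where K: "K > 0" "\<And>z. \<bar>z \<bullet> (P *v z)\<bar> \<le> K * norm z ^ 2"
    using quadratic_form_bounded by blast
  have "storage t (y t) \<le> (2 * K / \<mu>) * running_cost y u t + (3 * K * norm r ^ 2) * exp (-2*\<alpha>*t)"
    for y u t
  proof -
    define e where "e = exp (-2*\<alpha>*t)"
    define q where "q = (y t - r) \<bullet> (Q *v (y t - r))"
    have e: "e > 0" by (simp add: e_def)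
    have "norm (y t) ^ 2 \<le> 2 * norm (y t - r) ^ 2 + 2 * norm r ^ 2"
      using norm_triangle_sub[of "y t" r] sum_squares_bound[of "norm (y t - r)" "norm r"]
        power_mono[of "norm (y t)" "norm (y t - r) + norm r" 2]
      by (simp add: power2_sum algebra_simps)
    moreover have "norm (y t - r) ^ 2 \<le> q / \<mu>"
      using \<mu> by (simp add: q_def pos_le_divide_eq mult.commute)
    ultimately have norm_y: "norm (y t) ^ 2 + norm r ^ 2 \<le> 2 * (q / \<mu>) + 3 * norm r ^ 2"
      by linarith
    have "storage t (y t) \<le> e * (K * (norm (y t) ^ 2 + norm r ^ 2))"
      unfolding storage_eq e_def[symmetric]
      using K(2)[of "vcat (y t) r"] e by (intro mult_left_mono) (auto simp: norm_vcat_power2)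
    also have "\<dots> \<le> e * (K * (2 * (q / \<mu>) + 3 * norm r ^ 2))"
      using norm_y e K(1) by (intro mult_left_mono) auto
    also have "\<dots> = (2 * K / \<mu>) * (e * q) + (3 * K * norm r ^ 2) * e"
      by (simp add: algebra_simps)
    also have "e * q \<le> running_cost y u t"
      using e R_nonneg[of "u t"] by (simp add: running_cost_def e_def q_def algebra_simps)
    then have "(2 * K / \<mu>) * (e * q) \<le> (2 * K / \<mu>) * running_cost y u t"
      using K(1) \<mu>(1) by (intro mult_left_mono) auto
    finally show ?thesis by (simp add: e_def)
  qed
  with \<mu>(1) K(1) that show ?thesis by (metis divide_pos_pos mult_pos_pos zero_less_numeral)
qed

lemma finite_cost_imp_storage_small:
  assumes finite: "cost \<alpha> Q R r y u < top" and \<epsilon>: "\<epsilon> > 0"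
  shows "\<exists>T\<ge>0. storage T (y T) < \<epsilon>"
proof (rule ccontr)
  assume "\<not> ?thesis"
  then have large: "\<And>T. 0 \<le> T \<Longrightarrow> \<epsilon> \<le> storage T (y T)" by (meson not_less)
  obtain C C' where C: "C > 0"
    and storage_le: "\<And>t. storage t (y t) \<le> C * running_cost y u t + C' * exp (-2*\<alpha>*t)"
    using storage_le_running_cost by metis
  have "((\<lambda>T. C' * exp (-2*\<alpha>*T)) \<longlongrightarrow> 0) at_top" using alpha by real_asymp
  then have "eventually (\<lambda>T. C' * exp (-2*\<alpha>*T) < \<epsilon> / 2) at_top"
    using \<epsilon> by (intro order_tendstoD(2)) auto
  then obtain T1 where T1: "\<And>T. T \<ge> T1 \<Longrightarrow> C' * exp (-2*\<alpha>*T) < \<epsilon> / 2"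
    unfolding eventually_at_top_linorder by blast
  have running_cost_large: "ennreal (\<epsilon> / (2 * C)) \<le> ennreal (running_cost y u T)"
    if "max T1 0 \<le> T" for T
  proof (rule ennreal_leI)
    have "\<epsilon> < C * running_cost y u T + \<epsilon> / 2"
      using large[of T] storage_le[of T] T1[of T] that by linarith
    then show "\<epsilon> / (2 * C) \<le> running_cost y u T"
      using C by (simp add: field_simps)
  qed
  have "cost \<alpha> Q R r y u = \<infinity>"
    unfolding cost_eq_running_cost
    by (rule nn_integral_Ici_eq_top[OF _ running_cost_large]) (use \<epsilon> C in simp)
  with finite show False by simp
qed

lemma storage_le_cost:
  assumes y: "trajectory A B x0 u y" and u: "piecewise_continuous u"
  shows "ennreal (storage 0 x0) \<le> cost \<alpha> Q R r y u"
proof (rule ennreal_le_epsilon)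
  fix \<epsilon> :: real assume "cost \<alpha> Q R r y u < top" and \<epsilon>: "0 < \<epsilon>"
  then obtain T where T: "T \<ge> 0" "storage T (y T) < \<epsilon>"
    using finite_cost_imp_storage_small by blast
  obtain S where S: "S \<ge> 0" "(\<integral>\<^sup>+t. ennreal (running_cost y u t) * indicator {0..T} t \<partial>lborel)
      = ennreal (storage 0 x0 - storage T (y T) + S)"
    using finite_horizon_cost[OF y u T(1)] by blast
  have "storage 0 x0 \<le> (storage 0 x0 - storage T (y T) + S) + \<epsilon>" using T S by linarith
  then have "ennreal (storage 0 x0) \<le> ennreal (storage 0 x0 - storage T (y T) + S) + ennreal \<epsilon>"
    using \<epsilon> unfolding ennreal_plus_if by (intro ennreal_leI) auto
  also have "\<dots> \<le> cost \<alpha> Q R r y u + ennreal \<epsilon>"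
    unfolding S(2)[symmetric] cost_eq_running_cost
    by (intro add_right_mono nn_integral_mono) (auto simp: indicator_def)
  finally show "ennreal (storage 0 x0) \<le> cost \<alpha> Q R r y u + ennreal \<epsilon>" .
qed

end

theorem theorem1:
  fixes A :: "real^'n^'n" and B :: "real^'m^'n" and Q :: "real^'n^'n" and R :: "real^'m^'m"
    and r x0 :: "real^'n" and \<alpha> :: real and Pe :: "real^('n+'n)^('n+'n)"
  assumes stab: "stabilizable A B"
    and Q: "sym_mat Q" "pos_def Q"
    and R: "sym_mat R" "pos_def R"
    and alpha: "\<alpha> > 0"
    and Pe: "smallest_psd_riccati
               (block (A - \<alpha> *\<^sub>R mat 1) 0 0 (- \<alpha> *\<^sub>R mat 1))
               (vblock B (0 :: real^'m^'n))
               (block Q (- Q) (- Q) Q)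
               R Pe"
  shows "\<exists>x. trajectory A B x0
              (\<lambda>t. (- matrix_inv R ** transpose B ** blk11 Pe) *v x t
                  + (- matrix_inv R ** transpose B ** blk12 Pe) *v r) x
           \<and> piecewise_continuous
              (\<lambda>t. (- matrix_inv R ** transpose B ** blk11 Pe) *v x t
                  + (- matrix_inv R ** transpose B ** blk12 Pe) *v r)
           \<and> (\<forall>u y. piecewise_continuous u \<and> trajectory A B x0 u y \<longrightarrow>
                cost \<alpha> Q R r x
                  (\<lambda>t. (- matrix_inv R ** transpose B ** blk11 Pe) *v x t
                      + (- matrix_inv R ** transpose B ** blk12 Pe) *v r)
                \<le> cost \<alpha> Q R r y u)"
proof -
  interpret discounted_tracking A B Q R r \<alpha> Pe
    using Q R alpha Pe unfolding smallest_psd_riccati_def by unfold_locales auto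
  obtain x where x: "trajectory A B x0 (\<lambda>t. feedback (x t)) x" and x_cont: "continuous_on UNIV x"
    using closed_loop_trajectory_exists by blast
  have "piecewise_continuous (\<lambda>t. feedback (x t))"
    by (intro continuous_on_imp_piecewise_continuous continuous_on_feedback x_cont)
  moreover have "cost \<alpha> Q R r x (\<lambda>t. feedback (x t)) \<le> cost \<alpha> Q R r y u"
    if "piecewise_continuous u \<and> trajectory A B x0 u y" for u y
    using feedback_cost_le_storage[OF x x_cont] storage_le_cost that by (meson order_trans)
  ultimately show ?thesis using x unfolding feedback_def by blast
qed

end
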